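(* For $\tau>0$, $$\mu_0(\tau;\tfrac14):=\int_{-\infty}^{\infty}\exp\left\{-\left(x^6-\tau x^4+\tfrac14\tau^2x^2\right)\right\}dx=\int_0^\infty s^{-1/2}\exp\left\{-s\left(s-\tfrac12\tau\right)^2\right\}ds$$ is given by $$\mu_0(\tau;\tfrac14)=\frac{\pi\sqrt{6\tau}}{9}\left\{I_{1/6}\!\left(\frac{\tau^3}{108}\right)+I_{-1/6}\!\left(\frac{\tau^3}{108}\right)\right\}\exp\left(-\frac{\tau^3}{108}\right).$$
   Context: $I_\nu(z)$ denotes the modified Bessel function of the first kind. *)

theory Defs
  imports "HOL-Analysis.Analysis"
begin

text \<open>Modified Bessel function of the first kind, for real order nu and real
  argument z > 0, via its defining power series
  I_nu(z) = sum_k (z/2)^(2k+nu) / (k! Gamma(k+nu+1)).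
  rGamma is the reciprocal Gamma function (zero at non-positive integers).\<close>
definition besselI :: "real \<Rightarrow> real \<Rightarrow> real" where
  "besselI \<nu> z = (\<Sum>k. (z / 2) powr (2 * real k + \<nu>) * rGamma (real k + \<nu> + 1) / fact k)"

end

theory Submission
  imports Defs "HOL-Real_Asymp.Real_Asymp"
begin

(*
  Put w_t(x) = exp(-(x^6 - t x^4 + t^2 x^2/4 - t^3/108)) and E(t) = \<integral> w_t, so that the
  x-integral equals exp(-t^3/108) E(t). Differentiating twice under the integral sign and
  integrating the x-derivative of x (t - 3x^2)/18 w_t over the real line gives E'' = t^4/1296 E.
  The Bessel side sqrt(6t) (I_{1/6} + I_{-1/6})(t^3/108) is an entire power series B(t) in t
  solving the same equation, and E and (pi/9) B have the same value and slope at t = 0 because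
  Gamma(1/6) Gamma(5/6) = 2 pi. An energy estimate for the linear ODE gives E = (pi/9) B for
  t >= 0. The s-integral is the x-integral after the substitution s = x^2.
*)

section \<open>Tools from real analysis\<close>

lemma abs_difference_quotient_le:
  fixes f f' :: "real \<Rightarrow> real"
  assumes der: "\<And>t. (f has_real_derivative f' t) (at t)"
    and bound: "\<And>t. \<bar>t - t0\<bar> \<le> 1 \<Longrightarrow> \<bar>f' t\<bar> \<le> B"
    and h: "h \<in> ball 0 1 - {0}"
  shows "\<bar>(f (t0 + h) - f t0) / h\<bar> \<le> B"
proof -
  have "norm (f (t0 + h) - f t0) \<le> B * norm (t0 + h - t0)"
  proof (rule field_differentiable_bound[of "cball t0 1" f f' B "t0 + h" t0])
    show "(f has_field_derivative f' t) (at t within cball t0 1)" for t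
      using der by (rule has_field_derivative_at_within)
    show "norm (f' t) \<le> B" if "t \<in> cball t0 1" for t
      using that bound by (simp add: dist_real_def abs_minus_commute)
  qed (use h in \<open>simp_all add: dist_real_def\<close>)
  then show ?thesis using h by (simp add: abs_divide divide_simps)
qed

lemma has_real_derivative_integral_UNIV:
  fixes f f' :: "real \<Rightarrow> real \<Rightarrow> real" and G :: "real \<Rightarrow> real"
  assumes der: "\<And>t x. ((\<lambda>t. f t x) has_real_derivative f' t x) (at t)"
    and f_int: "\<And>t. f t integrable_on UNIV"
    and G_int: "G integrable_on UNIV"
    and bound: "\<And>t x. \<bar>t - t0\<bar> \<le> 1 \<Longrightarrow> \<bar>f' t x\<bar> \<le> G x"
  shows "((\<lambda>t. integral UNIV (f t)) has_real_derivative integral UNIV (f' t0)) (at t0)"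
proof -
  define q where "q h x = (f (t0 + h) x - f t0 x) / h" for h x
  have "((\<lambda>h. integral UNIV (q h)) \<longlongrightarrow> integral UNIV (f' t0)) (at 0 within ball 0 1)"
    unfolding tendsto_at_iff_sequentially
  proof (intro allI impI)
    fix X :: "nat \<Rightarrow> real" assume X: "\<forall>i. X i \<in> ball 0 1 - {0}" "X \<longlonglongrightarrow> 0"
    show "((\<lambda>h. integral UNIV (q h)) \<circ> X) \<longlonglongrightarrow> integral UNIV (f' t0)"
      unfolding o_def
    proof (rule dominated_convergence(2)[OF _ G_int])
      show "q (X i) integrable_on UNIV" for i
        unfolding q_def by (intro integrable_on_divide integrable_diff f_int)
      show "norm (q (X i) x) \<le> G x" for i x
        unfolding q_def real_norm_def using der bound X(1)
        by (intro abs_difference_quotient_le) auto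
      show "(\<lambda>i. q (X i) x) \<longlonglongrightarrow> f' t0 x" for x
      proof -
        have "((\<lambda>h. (f (t0 + h) x - f t0 x) / h) \<longlongrightarrow> f' t0 x) (at 0)"
          using der[of x t0] unfolding DERIV_def .
        then show ?thesis
          using X unfolding tendsto_at_iff_sequentially q_def o_def by blast
      qed
    qed
  qed
  then have "((\<lambda>h. integral UNIV (q h)) \<longlongrightarrow> integral UNIV (f' t0)) (at 0)"
    using at_within_open[of 0 "ball (0::real) 1"] by simp
  moreover have "integral UNIV (q h) = (integral UNIV (f (t0 + h)) - integral UNIV (f t0)) / h" for h
    unfolding q_def by (simp add: integral_diff f_int)
  ultimately show ?thesis unfolding DERIV_def by (simp only:)
qed

lemma integral_UNIV_derivative_eq_0:
  fixes F f :: "real \<Rightarrow> real"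
  assumes der: "\<And>x. (F has_real_derivative f x) (at x)"
    and f_int: "f absolutely_integrable_on UNIV"
    and top: "(F \<longlongrightarrow> 0) at_top" and bot: "(F \<longlongrightarrow> 0) at_bot"
  shows "integral UNIV f = 0"
proof -
  define q where "q n x = (if x \<in> {-real n..real n} then f x else 0)" for n x
  have "(f has_integral (F (real n) - F (- real n))) {-real n..real n}" for n
    using der by (intro fundamental_theorem_of_calculus)
      (auto simp: has_real_derivative_iff_has_vector_derivative[symmetric] intro: has_field_derivative_at_within)
  then have q_int: "(q n has_integral (F (real n) - F (- real n))) UNIV" for n
    unfolding q_def has_integral_restrict_UNIV .
  have "(\<lambda>n. integral UNIV (q n)) \<longlonglongrightarrow> integral UNIV f"
  proof (rule dominated_convergence(2))
    show "q n integrable_on UNIV" for n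
      using q_int by blast
    show "(\<lambda>x. norm (f x)) integrable_on UNIV"
      using f_int absolutely_integrable_on_def by blast
    show "norm (q n x) \<le> norm (f x)" for n x
      by (simp add: q_def)
    show "(\<lambda>n. q n x) \<longlonglongrightarrow> f x" for x
    proof (rule tendsto_eventually)
      show "\<forall>\<^sub>F n in sequentially. q n x = f x"
        using eventually_ge_at_top[of "nat \<lceil>\<bar>x\<bar>\<rceil>"]
      proof eventually_elim
        case (elim n)
        then have "\<bar>x\<bar> \<le> real n" by linarith
        then show ?case by (simp add: q_def abs_le_iff)
      qed
    qed
  qed
  moreover have "integral UNIV (q n) = F (real n) - F (- real n)" for n
    using q_int by (rule integral_unique)
  ultimately have "(\<lambda>n. F (real n) - F (- real n)) \<longlonglongrightarrow> integral UNIV f"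
    by simp
  moreover have "(\<lambda>n. F (real n) - F (- real n)) \<longlonglongrightarrow> 0 - 0"
    using filterlim_compose[OF top filterlim_real_sequentially]
      filterlim_compose[OF bot filterlim_compose[OF filterlim_uminus_at_bot_at_top filterlim_real_sequentially]]
    by (intro tendsto_diff) (simp_all add: o_def)
  ultimately show ?thesis
    by (simp add: LIMSEQ_unique)
qed

lemma bounded_of_tendsto_at_top_at_bot:
  fixes h :: "real \<Rightarrow> real"
  assumes cont: "continuous_on UNIV h" and top: "(h \<longlongrightarrow> 0) at_top" and bot: "(h \<longlongrightarrow> 0) at_bot"
  obtains M where "\<And>x. \<bar>h x\<bar> \<le> M"
proof -
  obtain A where A: "\<And>x. A \<le> x \<Longrightarrow> \<bar>h x\<bar> < 1"
    using order_tendstoD(2)[OF tendsto_rabs[OF top], of 1] by (auto simp: eventually_at_top_linorder)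
  obtain B where B: "\<And>x. x \<le> B \<Longrightarrow> \<bar>h x\<bar> < 1"
    using order_tendstoD(2)[OF tendsto_rabs[OF bot], of 1] by (auto simp: eventually_at_bot_linorder)
  have "compact (h ` {B..A})"
    using cont by (intro compact_continuous_image) (auto intro: continuous_on_subset)
  then obtain K where K: "\<And>y. y \<in> h ` {B..A} \<Longrightarrow> norm y \<le> K"
    by (meson bounded_iff compact_imp_bounded)
  have "\<bar>h x\<bar> \<le> max K 1" for x
    using A[of x] B[of x] K[of "h x"] by (cases "A \<le> x"; cases "x \<le> B") auto
  then show ?thesis by (rule that)
qed

lemma absolutely_integrable_exp_neg_abs: "(\<lambda>x::real. exp (- \<bar>x\<bar>)) absolutely_integrable_on UNIV"
proof -
  have "(\<lambda>x::real. exp (- 1 * x)) integrable_on {0..}"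
    by (rule integrable_on_exp_minus_to_infinity) simp
  then have "(\<lambda>x::real. exp (- \<bar>x\<bar>)) integrable_on {0..}"
    by (rule integrable_eq) simp
  then have pos: "(\<lambda>x::real. exp (- \<bar>x\<bar>)) absolutely_integrable_on {0..}"
    by (rule nonnegative_absolutely_integrable_1) simp
  have reflect: "uminus ` {..0::real} \<subseteq> {0..}" "uminus ` {0::real..} \<subseteq> {..0}" by auto
  have neg: "(\<lambda>x::real. exp (- \<bar>x\<bar>)) absolutely_integrable_on {..0}"
    using has_absolute_integral_reflect_real[OF reflect, of "\<lambda>x. exp (- \<bar>x\<bar>)" "integral {0..} (\<lambda>x. exp (- \<bar>x\<bar>))"] pos
    by simp
  have "(\<lambda>x::real. exp (- \<bar>x\<bar>)) absolutely_integrable_on ({..0} \<union> {0..})"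
    using neg pos by (rule set_integrable_Un) simp_all
  also have "{..0} \<union> {0..} = (UNIV :: real set)" by auto
  finally show ?thesis .
qed

lemma absolutely_integrable_continuous_dominated:
  fixes f g :: "real \<Rightarrow> real"
  assumes "continuous_on UNIV f" "g integrable_on UNIV" "\<And>x. \<bar>f x\<bar> \<le> g x"
  shows "f absolutely_integrable_on UNIV"
proof (rule measurable_bounded_by_integrable_imp_absolutely_integrable)
  show "f \<in> borel_measurable (lebesgue_on UNIV)"
    using assms(1) by (rule continuous_imp_measurable_on_sets_lebesgue) simp
qed (use assms in auto)

lemma absolutely_integrable_of_exp_decay:
  fixes g :: "real \<Rightarrow> real"
  assumes cont: "continuous_on UNIV g"
    and top: "((\<lambda>x. g x * exp x) \<longlongrightarrow> 0) at_top"
    and bot: "((\<lambda>x. g x * exp (- x)) \<longlongrightarrow> 0) at_bot"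
  shows "g absolutely_integrable_on UNIV"
proof -
  define h where "h x = g x * exp \<bar>x\<bar>" for x
  have "(h \<longlongrightarrow> 0) at_top"
    using top by (rule Lim_transform_eventually)
      (use eventually_ge_at_top[of 0] in \<open>eventually_elim, simp add: h_def\<close>)
  moreover have "(h \<longlongrightarrow> 0) at_bot"
    using bot by (rule Lim_transform_eventually)
      (use eventually_le_at_bot[of 0] in \<open>eventually_elim, simp add: h_def\<close>)
  moreover have "continuous_on UNIV h"
    unfolding h_def by (intro continuous_intros cont)
  ultimately obtain M where M: "\<And>x. \<bar>h x\<bar> \<le> M"
    using bounded_of_tendsto_at_top_at_bot by blast
  show ?thesis
  proof (rule absolutely_integrable_continuous_dominated[OF cont])
    show "(\<lambda>x. M * exp (- \<bar>x\<bar>)) integrable_on UNIV"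
      using absolutely_integrable_exp_neg_abs unfolding absolutely_integrable_on_def
      by (intro integrable_on_mult_right) blast
    show "\<bar>g x\<bar> \<le> M * exp (- \<bar>x\<bar>)" for x
    proof -
      have "\<bar>g x\<bar> = \<bar>h x\<bar> * exp (- \<bar>x\<bar>)"
        by (simp add: h_def abs_mult exp_minus field_simps)
      also have "\<dots> \<le> M * exp (- \<bar>x\<bar>)"
        using M[of x] by (rule mult_right_mono) simp
      finally show ?thesis .
    qed
  qed
qed

lemma nonneg_has_integral_iff_absolutely_integrable:
  fixes f :: "'a::euclidean_space \<Rightarrow> real"
  assumes "\<And>x. x \<in> S \<Longrightarrow> 0 \<le> f x"
  shows "(f has_integral I) S \<longleftrightarrow> f absolutely_integrable_on S \<and> integral S f = I"
  using assms nonnegative_absolutely_integrable_1 absolutely_integrable_on_def has_integral_iff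
  by blast

lemma has_integral_UNIV_of_even:
  fixes h :: "real \<Rightarrow> real"
  assumes even: "\<And>x. h (- x) = h x" and nonneg: "\<And>x. 0 \<le> h x"
    and half: "(h has_integral I) {0<..}"
  shows "(h has_integral 2 * I) UNIV"
proof -
  have "h absolutely_integrable_on {0<..} \<and> integral {0<..} h = I"
    using half nonneg_has_integral_iff_absolutely_integrable[of "{0<..}" h] nonneg by simp
  moreover have reflect: "uminus ` {..<0::real} \<subseteq> {0<..}" "uminus ` {(0::real)<..} \<subseteq> {..<0}"
    by auto
  ultimately have "(\<lambda>x. h (- x)) absolutely_integrable_on {..<0} \<and> integral {..<0} (\<lambda>x. h (- x)) = I"
    using has_absolute_integral_reflect_real[OF reflect, of h I] by simp
  then have "(h has_integral I) {..<0}"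
    using nonneg_has_integral_iff_absolutely_integrable[of "{..<0}" h] nonneg by (simp add: even)
  then have "(h has_integral I + I) ({..<0} \<union> {0<..})"
    using half by (rule has_integral_Un) (rule negligible_subset[OF negligible_empty], auto)
  moreover have "{..<0} \<union> {0<..} = UNIV - {0::real}" by auto
  ultimately have "(h has_integral I + I) (UNIV - {0})"
    by simp
  then have "(h has_integral 2 * I) (UNIV - {0})"
    by (simp only: mult_2)
  then show ?thesis
    by (rule has_integral_spike_set_eq[THEN iffD1, rotated 2]) (auto intro: negligible_subset[of "{0}"])
qed

lemma has_integral_even_iff:
  fixes h :: "real \<Rightarrow> real"
  assumes even: "\<And>x. h (- x) = h x" and nonneg: "\<And>x. 0 \<le> h x"
  shows "(h has_integral 2 * I) UNIV \<longleftrightarrow> (h has_integral I) {0<..}"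
proof
  assume full: "(h has_integral 2 * I) UNIV"
  then have "h absolutely_integrable_on UNIV"
    using nonneg_has_integral_iff_absolutely_integrable[of UNIV h] nonneg by simp
  then have "h absolutely_integrable_on {0<..}"
    by (rule set_integrable_subset) auto
  then have half: "(h has_integral integral {0<..} h) {0<..}"
    unfolding absolutely_integrable_on_def by (intro has_integral_integral[THEN iffD1]) (rule conjunct1)
  have "2 * I = 2 * integral {0<..} h"
    using has_integral_UNIV_of_even[where h = h, OF even nonneg half] full by (rule has_integral_unique[rotated])
  with half show "(h has_integral I) {0<..}" by simp
qed (rule has_integral_UNIV_of_even[where h = h, OF even nonneg])

lemma has_integral_power_substitution:
  fixes g :: "real \<Rightarrow> real"
  assumes m: "0 < m" and nonneg: "\<And>u. 0 < u \<Longrightarrow> 0 \<le> g u"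
  shows "((\<lambda>x. real m * x ^ (m - 1) * g (x ^ m)) has_integral I) {0<..} \<longleftrightarrow> (g has_integral I) {0<..}"
proof -
  have image: "(\<lambda>x. x ^ m) ` {0<..} = {0::real<..}"
  proof
    show "{0<..} \<subseteq> (\<lambda>x. x ^ m) ` {0::real<..}"
    proof
      fix u :: real assume "u \<in> {0<..}"
      then have "u = root m u ^ m" "root m u \<in> {0<..}"
        using m by (simp_all add: real_root_pow_pos)
      then show "u \<in> (\<lambda>x. x ^ m) ` {0<..}" by blast
    qed
  qed auto
  have inj: "inj_on (\<lambda>x::real. x ^ m) {0<..}"
    using m by (auto intro!: inj_onI simp: power_eq_iff_eq_base)
  have deriv: "((\<lambda>x. x ^ m) has_field_derivative real m * x ^ (m - 1)) (at x within {0<..})" for x :: real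
    by (rule derivative_eq_intros refl)+ simp
  have "((\<lambda>x. real m * x ^ (m - 1) * g (x ^ m)) has_integral I) {0<..}
      \<longleftrightarrow> ((\<lambda>x. \<bar>real m * x ^ (m - 1)\<bar> * g (x ^ m)) has_integral I) {0<..}"
    by (rule has_integral_cong) simp
  also have "\<dots> \<longleftrightarrow> (\<lambda>x. \<bar>real m * x ^ (m - 1)\<bar> * g (x ^ m)) absolutely_integrable_on {0<..}
      \<and> integral {0<..} (\<lambda>x. \<bar>real m * x ^ (m - 1)\<bar> * g (x ^ m)) = I"
    by (rule nonneg_has_integral_iff_absolutely_integrable) (simp add: nonneg)
  also have "\<dots> \<longleftrightarrow> g absolutely_integrable_on {0<..} \<and> integral {0<..} g = I"
    using has_absolute_integral_change_of_variables_1'[OF _ deriv inj, of g I] by (simp add: image)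
  also have "\<dots> \<longleftrightarrow> (g has_integral I) {0<..}"
    by (rule nonneg_has_integral_iff_absolutely_integrable[symmetric]) (simp add: nonneg)
  finally show ?thesis .
qed

lemma has_integral_power_mult_exp_neg_power:
  assumes m: "0 < m"
  shows "((\<lambda>x. x ^ a * exp (- (x ^ m))) has_integral Gamma ((real a + 1) / real m) / real m) {0<..}"
proof -
  define c where "c = (real a + 1) / real m"
  have "((\<lambda>u. u powr (c - 1) / exp u) has_integral Gamma c) {0..}"
    using m by (intro Gamma_integral_real) (simp add: c_def)
  then have "((\<lambda>u. u powr (c - 1) / exp u) has_integral Gamma c) {0<..}"
    by (rule has_integral_spike_set_eq[THEN iffD1, rotated 2]) (auto intro: negligible_subset[of "{0}"])
  then have "((\<lambda>x. real m * x ^ (m - 1) * ((x ^ m) powr (c - 1) / exp (x ^ m))) has_integral Gamma c) {0<..}"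
    using m by (subst has_integral_power_substitution) simp_all
  moreover have "real m * x ^ (m - 1) * ((x ^ m) powr (c - 1) / exp (x ^ m)) = real m * (x ^ a * exp (- (x ^ m)))"
    if "x \<in> {0<..}" for x :: real
  proof -
    have "x ^ (m - 1) * (x ^ m) powr (c - 1) = x powr (real (m - 1) + real m * (c - 1))"
      using that by (simp add: powr_realpow[symmetric] powr_powr powr_add)
    also have "real (m - 1) + real m * (c - 1) = real a"
      using m by (simp add: c_def of_nat_diff field_simps)
    finally show ?thesis
      using that by (simp add: powr_realpow exp_minus field_simps)
  qed
  ultimately have "((\<lambda>x. real m * (x ^ a * exp (- (x ^ m)))) has_integral Gamma c) {0<..}"
    by (rule has_integral_eq[rotated])
  from has_integral_divide[OF this, of "real m"] show ?thesis
    using m unfolding c_def by simp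
qed

lemma has_integral_even_iff_sqrt_substitution:
  fixes h :: "real \<Rightarrow> real"
  assumes even: "\<And>x. h (- x) = h x" and nonneg: "\<And>x. 0 \<le> h x"
  shows "(h has_integral I) UNIV \<longleftrightarrow> ((\<lambda>s. s powr (-1/2) * h (sqrt s)) has_integral I) {0<..}"
proof -
  have substitute: "2 * h x = real 2 * x ^ (2 - 1) * ((x ^ 2) powr (-1/2) * h (sqrt (x ^ 2)))"
    if "x \<in> {0<..}" for x :: real
  proof -
    have "(x ^ 2) powr (-1/2) = inverse ((x ^ 2) powr (1/2))"
      by (rule powr_minus[of "x ^ 2" "1/2", unfolded minus_divide_left])
    also have "\<dots> = inverse x"
      using that by (simp add: powr_half_sqrt)
    finally show ?thesis
      using that by simp
  qed
  have "(h has_integral I) UNIV \<longleftrightarrow> (h has_integral I / 2) {0<..}"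
    using has_integral_even_iff[where h = h and I = "I / 2", OF even nonneg] by simp
  also have "\<dots> \<longleftrightarrow> ((\<lambda>x. 2 * h x) has_integral I) {0<..}"
    by (simp add: has_integral_mult_right_iff)
  also have "\<dots> \<longleftrightarrow>
      ((\<lambda>x. real 2 * x ^ (2 - 1) * ((x ^ 2) powr (-1/2) * h (sqrt (x ^ 2)))) has_integral I) {0<..}"
    using substitute by (rule has_integral_cong)
  also have "\<dots> \<longleftrightarrow> ((\<lambda>s. s powr (-1/2) * h (sqrt s)) has_integral I) {0<..}"
    by (rule has_integral_power_substitution) (simp_all add: nonneg)
  finally show ?thesis .
qed

lemma Gamma_reflection_real: "Gamma x * Gamma (1 - x) = pi / sin (pi * x)" for x :: real
proof -
  have "Gamma (1 - complex_of_real x) = complex_of_real (Gamma (1 - x))"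
    by (metis Gamma_complex_of_real of_real_1 of_real_diff)
  then have "complex_of_real (Gamma x * Gamma (1 - x)) = complex_of_real (pi / sin (pi * x))"
    using Gamma_reflection_complex[of "complex_of_real x"]
    by (simp add: Gamma_complex_of_real sin_of_real flip: of_real_mult)
  then show ?thesis by (rule of_real_eq_iff[THEN iffD1])
qed

lemma linear_second_order_ode_zero:
  fixes y y' p :: "real \<Rightarrow> real"
  assumes y: "\<And>s. (y has_real_derivative y' s) (at s)"
    and y': "\<And>s. (y' has_real_derivative p s * y s) (at s)"
    and init: "y 0 = 0" "y' 0 = 0"
    and p_bound: "\<And>s. 0 \<le> s \<Longrightarrow> s \<le> t \<Longrightarrow> \<bar>p s\<bar> \<le> L"
    and t: "0 \<le> t"
  shows "y t = 0"
proof -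
  define E where "E s = (y s ^ 2 + y' s ^ 2) * exp (- ((1 + L) * s))" for s
  have E_deriv: "(E has_real_derivative
      (2 * y s * y' s * (1 + p s) - (y s ^ 2 + y' s ^ 2) * (1 + L)) * exp (- ((1 + L) * s))) (at s)" for s
    unfolding E_def
    by (rule derivative_eq_intros y y' refl | simp)+ (simp add: algebra_simps)
  have "E t \<le> E 0"
  proof (rule DERIV_nonpos_imp_nonincreasing[OF t])
    fix s assume s: "0 \<le> s" "s \<le> t"
    have "0 \<le> (\<bar>y s\<bar> - \<bar>y' s\<bar>) ^ 2" by simp
    then have squares: "\<bar>2 * y s * y' s\<bar> \<le> y s ^ 2 + y' s ^ 2"
      by (simp add: power2_diff abs_mult power2_abs)
    have "\<bar>1 + p s\<bar> \<le> 1 + L"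
      using p_bound[OF s] by linarith
    have "2 * y s * y' s * (1 + p s) \<le> \<bar>2 * y s * y' s\<bar> * \<bar>1 + p s\<bar>"
      using abs_ge_self[of "2 * y s * y' s * (1 + p s)"] by (simp only: abs_mult)
    also have "\<dots> \<le> (y s ^ 2 + y' s ^ 2) * (1 + L)"
      using squares \<open>\<bar>1 + p s\<bar> \<le> 1 + L\<close> by (intro mult_mono) auto
    finally have "(2 * y s * y' s * (1 + p s) - (y s ^ 2 + y' s ^ 2) * (1 + L)) * exp (- ((1 + L) * s)) \<le> 0"
      by (intro mult_nonpos_nonneg) auto
    then show "\<exists>d. (E has_real_derivative d) (at s) \<and> d \<le> 0"
      using E_deriv by blast
  qed
  then have "(y t ^ 2 + y' t ^ 2) * exp (- ((1 + L) * t)) \<le> 0"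
    using init by (simp add: E_def)
  then have "y t ^ 2 + y' t ^ 2 \<le> 0"
    by (simp add: mult_le_0_iff)
  then have "y t ^ 2 \<le> 0"
    using zero_le_power2[of "y' t"] by linarith
  then show ?thesis by simp
qed

section \<open>The Bessel power series\<close>

lemma sums_split_mod_0_1:
  fixes f :: "nat \<Rightarrow> 'a::real_normed_vector"
  assumes m: "2 \<le> m"
    and vanish: "\<And>n. 1 < n mod m \<Longrightarrow> f n = 0"
    and f0: "(\<lambda>k. f (m * k)) sums a" and f1: "(\<lambda>k. f (m * k + 1)) sums b"
  shows "f sums (a + b)"
proof -
  define g where "g r n = (if n mod m = r then f n else 0)" for r n
  have "g 0 sums a"
  proof (subst sums_mono_reindex[of "\<lambda>k. m * k", symmetric])
    show "strict_mono (\<lambda>k. m * k)" using m by (auto simp: strict_mono_def)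
    show "g 0 n = 0" if "n \<notin> range (\<lambda>k. m * k)" for n
      using that by (auto simp: g_def elim!: dvdE simp flip: dvd_eq_mod_eq_0)
    show "(\<lambda>k. g 0 (m * k)) sums a" using f0 by (simp add: g_def)
  qed
  moreover have "g 1 sums b"
  proof (subst sums_mono_reindex[of "\<lambda>k. m * k + 1", symmetric])
    show "strict_mono (\<lambda>k. m * k + 1)" using m by (auto simp: strict_mono_def)
    show "g 1 n = 0" if "n \<notin> range (\<lambda>k. m * k + 1)" for n
    proof (rule ccontr)
      assume "g 1 n \<noteq> 0"
      then have "n mod m = 1" by (simp add: g_def split: if_splits)
      then have "n = m * (n div m) + 1" by (metis mult_div_mod_eq)
      with that show False by blast
    qed
    show "(\<lambda>k. g 1 (m * k + 1)) sums b" using f1 m by (simp add: g_def mod_Suc)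
  qed
  ultimately have "(\<lambda>n. g 0 n + g 1 n) sums (a + b)" by (rule sums_add)
  moreover have "g 0 n + g 1 n = f n" for n
    using vanish[of n] by (auto simp: g_def)
  ultimately show ?thesis by simp
qed

(* Taylor coefficients of sqrt(6t) I_{-1/6}(t^3/108) (exponents 6k) plus those of
   sqrt(6t) I_{1/6}(t^3/108) (exponents 6k+1). *)
definition bessel_coeff :: "nat \<Rightarrow> real" where
  "bessel_coeff n =
     (if n mod 6 = 0 then 6 * rGamma (real (n div 6) + 5/6) / (fact (n div 6) * 6 ^ n)
      else if n mod 6 = 1 then 6 * rGamma (real (n div 6) + 7/6) / (fact (n div 6) * 6 ^ n)
      else 0)"

definition bessel_series :: "real \<Rightarrow> real" where
  "bessel_series t = (\<Sum>n. bessel_coeff n * t ^ n)"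

definition bessel_series_deriv :: "real \<Rightarrow> real" where
  "bessel_series_deriv t = (\<Sum>n. diffs bessel_coeff n * t ^ n)"

lemma bessel_coeff_add6:
  "1296 * (real n + 5) * (real n + 6) * bessel_coeff (n + 6) = bessel_coeff n"
proof -
  define k where "k = n div 6"
  have div: "(n + 6) div 6 = Suc k" "(n + 6) mod 6 = n mod 6" by (simp_all add: k_def)
  have shift: "rGamma (real k + a) = (real k + a) * rGamma (real (Suc k) + a)" for a
    using rGamma_plus1[of "real k + a"] by (simp add: add_ac)
  have n: "real n = 6 * real k + real (n mod 6)"
    unfolding k_def by (metis div_mult_mod_eq of_nat_add of_nat_mult of_nat_numeral mult.commute)
  have pos: "0 < 6 * real k + 5" "0 < real k + 1" "(0::real) < fact k * 6 ^ n" by auto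
  consider "n mod 6 = 0" | "n mod 6 = 1" | "1 < n mod 6" by linarith
  then show ?thesis
  proof cases
    case 1
    then show ?thesis
      using n pos unfolding bessel_coeff_def div k_def[symmetric] shift[of "5/6"]
      by (simp add: power_add divide_simps) (simp add: algebra_simps)
  next
    case 2
    then show ?thesis
      using n pos unfolding bessel_coeff_def div k_def[symmetric] shift[of "7/6"]
      by (simp add: power_add divide_simps)
  qed (simp add: bessel_coeff_def div)
qed

lemma summable_bessel_coeff_residue:
  "summable (\<lambda>k. bessel_coeff (6 * k + j) * x ^ (6 * k + j))"
proof (rule summable_ratio_test[of "1/2" "nat \<lceil>x ^ 6\<rceil>"])
  fix k assume k: "nat \<lceil>x ^ 6\<rceil> \<le> k"
  define n where "n = 6 * k + j"
  define D where "D = 1296 * (real n + 5) * (real n + 6)"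
  have "0 < D" by (simp add: D_def add_pos_pos)
  then have step: "bessel_coeff (n + 6) = bessel_coeff n / D"
    using bessel_coeff_add6[of n] unfolding D_def by (metis less_irrefl nonzero_mult_div_cancel_left)
  have "x ^ 6 \<le> real k" using k by linarith
  also have "\<dots> \<le> D / 2" by (simp add: D_def n_def algebra_simps)
  finally have q: "0 \<le> x ^ 6 / D" "x ^ 6 / D \<le> 1/2"
    using \<open>0 < D\<close> by (simp_all add: divide_simps zero_le_even_power)
  have "norm (bessel_coeff (n + 6) * x ^ (n + 6)) = x ^ 6 / D * norm (bessel_coeff n * x ^ n)"
    using q(1) \<open>0 < D\<close> by (simp add: step power_add abs_mult mult_ac)
  also have "\<dots> \<le> 1/2 * norm (bessel_coeff n * x ^ n)"
    using q(2) by (rule mult_right_mono) simp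
  finally show "norm (bessel_coeff (6 * Suc k + j) * x ^ (6 * Suc k + j))
      \<le> 1/2 * norm (bessel_coeff (6 * k + j) * x ^ (6 * k + j))"
    by (simp add: n_def add_ac)
qed simp

lemma summable_bessel_series: "summable (\<lambda>n. bessel_coeff n * x ^ n)"
proof -
  have "(\<lambda>n. bessel_coeff n * x ^ n) sums
      ((\<Sum>k. bessel_coeff (6 * k) * x ^ (6 * k)) + (\<Sum>k. bessel_coeff (6 * k + 1) * x ^ (6 * k + 1)))"
    using summable_bessel_coeff_residue[of 0 x] summable_bessel_coeff_residue[of 1 x]
    by (intro sums_split_mod_0_1[where m = 6]) (auto simp: bessel_coeff_def summable_sums)
  then show ?thesis by (rule sums_summable)
qed

lemma diffs_diffs_bessel_coeff:
  "diffs (diffs bessel_coeff) n = (if 4 \<le> n then bessel_coeff (n - 4) / 1296 else 0)"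
proof (cases "4 \<le> n")
  case True
  then obtain m where m: "n = m + 4" by (metis add.commute le_Suc_ex)
  then have "diffs (diffs bessel_coeff) n = (real m + 5) * (real m + 6) * bessel_coeff (m + 6)"
    by (simp add: diffs_def eval_nat_numeral add_ac)
  also have "\<dots> = bessel_coeff m / 1296"
    using bessel_coeff_add6[of m] by (simp add: field_simps)
  finally show ?thesis using m by simp
next
  case False
  then have "n \<in> {0, 1, 2, 3}" by auto
  then show ?thesis by (auto simp: diffs_def bessel_coeff_def)
qed

lemma bessel_series_has_derivative:
  "(bessel_series has_real_derivative bessel_series_deriv t) (at t)"
  unfolding bessel_series_def bessel_series_deriv_def
  by (rule termdiffs_strong_converges_everywhere) (rule summable_bessel_series)

lemma bessel_series_deriv_has_derivative:
  "(bessel_series_deriv has_real_derivative t ^ 4 / 1296 * bessel_series t) (at t)"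
proof -
  define f where "f n = diffs (diffs bessel_coeff) n * t ^ n" for n
  have "(\<lambda>n. f (n + 4)) sums (t ^ 4 / 1296 * bessel_series t)"
    unfolding bessel_series_def
    using sums_mult[OF summable_sums[OF summable_bessel_series], of "t ^ 4 / 1296"]
    by (simp add: f_def diffs_diffs_bessel_coeff power_add mult_ac)
  moreover have "(\<Sum>i<4. f i) = 0"
    by (simp add: f_def diffs_diffs_bessel_coeff numeral_eq_Suc)
  ultimately have "f sums (t ^ 4 / 1296 * bessel_series t)"
    by (subst (asm) sums_iff_shift) simp
  then have "(\<Sum>n. diffs (diffs bessel_coeff) n * t ^ n) = t ^ 4 / 1296 * bessel_series t"
    unfolding f_def by (rule sums_unique[symmetric])
  moreover have "(bessel_series_deriv has_real_derivative (\<Sum>n. diffs (diffs bessel_coeff) n * t ^ n)) (at t)"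
    unfolding bessel_series_deriv_def
    by (intro termdiffs_strong_converges_everywhere termdiff_converges_all summable_bessel_series)
  ultimately show ?thesis by (simp only:)
qed

lemma bessel_series_0: "bessel_series 0 = 6 * rGamma (5/6)"
  by (simp add: bessel_series_def powser_zero bessel_coeff_def)

lemma bessel_series_deriv_0: "bessel_series_deriv 0 = rGamma (7/6)"
  by (simp add: bessel_series_deriv_def powser_zero diffs_def bessel_coeff_def)

definition besselI_term :: "real \<Rightarrow> real \<Rightarrow> nat \<Rightarrow> real" where
  "besselI_term \<nu> z k = (z / 2) powr (2 * real k + \<nu>) * rGamma (real k + \<nu> + 1) / fact k"

lemma besselI_eq_suminf: "besselI \<nu> z = suminf (besselI_term \<nu> z)"
  unfolding besselI_def besselI_term_def ..

lemma sqrt_mult_besselI_term_powr: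
  fixes t :: real
  assumes "0 < t"
  shows "sqrt (6 * t) * besselI_term \<nu> (t ^ 3 / 108) k
    = 6 * (t / 6) powr (6 * real k + 3 * \<nu> + 1/2) * rGamma (real k + \<nu> + 1) / fact k"
proof -
  have cube: "t ^ 3 / 108 / 2 = (t / 6) powr 3"
    using assms by (simp add: powr_realpow power_divide)
  have root: "sqrt (6 * t) = 6 * (t / 6) powr (1/2)"
    using assms by (simp add: powr_half_sqrt real_sqrt_divide real_sqrt_mult field_simps)
  have "sqrt (6 * t) * (t ^ 3 / 108 / 2) powr (2 * real k + \<nu>)
      = 6 * ((t / 6) powr (1/2) * (t / 6) powr (3 * (2 * real k + \<nu>)))"
    by (simp only: cube root powr_powr mult.assoc)
  also have "\<dots> = 6 * (t / 6) powr (6 * real k + 3 * \<nu> + 1/2)"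
    by (simp add: powr_add[symmetric] algebra_simps)
  finally show ?thesis by (simp add: besselI_term_def)
qed

lemma sqrt_mult_besselI_term:
  fixes t :: real
  assumes t: "0 < t"
  shows "sqrt (6 * t) * besselI_term (-1/6) (t ^ 3 / 108) k = bessel_coeff (6 * k) * t ^ (6 * k)"
    and "sqrt (6 * t) * besselI_term (1/6) (t ^ 3 / 108) k = bessel_coeff (6 * k + 1) * t ^ (6 * k + 1)"
proof -
  have "(t / 6) powr (6 * real k + 3 * (-1/6) + 1/2) = (t / 6) ^ (6 * k)"
    using t powr_realpow[of "t / 6" "6 * k"] by simp
  then show "sqrt (6 * t) * besselI_term (-1/6) (t ^ 3 / 108) k = bessel_coeff (6 * k) * t ^ (6 * k)"
    using sqrt_mult_besselI_term_powr[OF t, of "-1/6" k]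
    by (simp add: bessel_coeff_def power_divide add.commute mult_ac)
  have "(6 * k + 1) div 6 = k" "(6 * k + 1) mod 6 = 1" by simp_all
  then have c: "bessel_coeff (6 * k + 1) = 6 * rGamma (real k + 7/6) / (fact k * 6 ^ (6 * k + 1))"
    unfolding bessel_coeff_def by simp
  have "(t / 6) powr (6 * real k + 3 * (1/6) + 1/2) = (t / 6) ^ (6 * k + 1)"
    using t powr_realpow[of "t / 6" "6 * k + 1"] by simp
  then show "sqrt (6 * t) * besselI_term (1/6) (t ^ 3 / 108) k = bessel_coeff (6 * k + 1) * t ^ (6 * k + 1)"
    using sqrt_mult_besselI_term_powr[OF t, of "1/6" k] unfolding c
    by (simp add: power_divide add.commute mult_ac)
qed

lemma bessel_series_eq_besselI:
  fixes t :: real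
  assumes t: "0 < t"
  shows "bessel_series t = sqrt (6 * t) * (besselI (1/6) (t ^ 3 / 108) + besselI (-1/6) (t ^ 3 / 108))"
proof -
  have sums: "(\<lambda>k. bessel_coeff (6 * k + j) * t ^ (6 * k + j)) sums (sqrt (6 * t) * besselI \<nu> (t ^ 3 / 108))"
    if eq: "\<And>k. sqrt (6 * t) * besselI_term \<nu> (t ^ 3 / 108) k = bessel_coeff (6 * k + j) * t ^ (6 * k + j)"
    for j \<nu>
  proof -
    have "besselI_term \<nu> (t ^ 3 / 108) = (\<lambda>k. bessel_coeff (6 * k + j) * t ^ (6 * k + j) / sqrt (6 * t))"
      using t by (simp add: fun_eq_iff flip: eq)
    then have "summable (besselI_term \<nu> (t ^ 3 / 108))"
      using summable_divide[OF summable_bessel_coeff_residue] by simp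
    then have "besselI_term \<nu> (t ^ 3 / 108) sums besselI \<nu> (t ^ 3 / 108)"
      unfolding besselI_eq_suminf by (rule summable_sums)
    from sums_mult[OF this, of "sqrt (6 * t)"] show ?thesis by (simp add: eq)
  qed
  have "(\<lambda>n. bessel_coeff n * t ^ n) sums
      (sqrt (6 * t) * besselI (-1/6) (t ^ 3 / 108) + sqrt (6 * t) * besselI (1/6) (t ^ 3 / 108))"
  proof (rule sums_split_mod_0_1[where m = 6])
    show "(\<lambda>k. bessel_coeff (6 * k) * t ^ (6 * k)) sums (sqrt (6 * t) * besselI (-1/6) (t ^ 3 / 108))"
      using sums[where j = 0] sqrt_mult_besselI_term(1)[OF t] by simp
    show "(\<lambda>k. bessel_coeff (6 * k + 1) * t ^ (6 * k + 1)) sums (sqrt (6 * t) * besselI (1/6) (t ^ 3 / 108))"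
      using sums[where j = 1] sqrt_mult_besselI_term(2)[OF t] by simp
  qed (auto simp: bessel_coeff_def)
  then show ?thesis
    unfolding bessel_series_def by (simp add: sums_iff algebra_simps)
qed

section \<open>The weight and its integral\<close>

(* The factor exp(t^3/108) removes the first-order term from the ODE satisfied by the integral. *)
definition weight :: "real \<Rightarrow> real \<Rightarrow> real" where
  "weight t x = exp (- (x ^ 6 - t * x ^ 4 + t ^ 2 * x ^ 2 / 4 - t ^ 3 / 108))"

definition weight_dt :: "real \<Rightarrow> real \<Rightarrow> real" where
  "weight_dt t x = (x ^ 4 - t * x ^ 2 / 2 + t ^ 2 / 36) * weight t x"

definition weight_dt2 :: "real \<Rightarrow> real \<Rightarrow> real" where
  "weight_dt2 t x = ((x ^ 4 - t * x ^ 2 / 2 + t ^ 2 / 36) ^ 2 + t / 18 - x ^ 2 / 2) * weight t x"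

definition weight_majorant :: "real \<Rightarrow> real \<Rightarrow> real" where
  "weight_majorant T x =
     (1 + x ^ 2 / 2 + T / 18 + (x ^ 4 + T * x ^ 2 / 2 + T ^ 2 / 36) ^ 2) * exp (- (x ^ 6) + T * x ^ 4 + T ^ 3)"

lemma has_real_derivative_weight: "((\<lambda>t. weight t x) has_real_derivative weight_dt t x) (at t)"
  unfolding weight_def weight_dt_def
  by (rule derivative_eq_intros refl | simp)+

lemma has_real_derivative_weight_dt: "((\<lambda>t. weight_dt t x) has_real_derivative weight_dt2 t x) (at t)"
  unfolding weight_dt_def weight_dt2_def
  by (rule derivative_eq_intros has_real_derivative_weight refl | simp)+
    (simp add: weight_dt_def algebra_simps power2_eq_square)

lemma has_real_derivative_weight_ode_primitive:
  "((\<lambda>x. x * (t - 3 * x ^ 2) / 18 * weight t x) has_real_derivative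
     weight_dt2 t x - t ^ 4 / 1296 * weight t x) (at x)"
  unfolding weight_dt2_def weight_def
  by (rule derivative_eq_intros refl | simp)+ (simp add: field_simps eval_nat_numeral)

lemma continuous_on_weight: "continuous_on UNIV (weight t)"
  and continuous_on_weight_dt: "continuous_on UNIV (weight_dt t)"
  and continuous_on_weight_dt2: "continuous_on UNIV (weight_dt2 t)"
  by (auto simp: weight_def weight_dt_def weight_dt2_def intro!: continuous_intros)

lemma weight_le_exp:
  assumes "\<bar>t\<bar> \<le> T"
  shows "weight t x \<le> exp (- (x ^ 6) + T * x ^ 4 + T ^ 3)"
proof -
  have "t * x ^ 4 \<le> T * x ^ 4"
    using assms by (intro mult_right_mono) (auto simp: zero_le_even_power)
  moreover have "t ^ 3 \<le> T ^ 3"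
    using assms power_mono[of "\<bar>t\<bar>" T 3] by (metis abs_ge_self abs_ge_zero order_trans power_abs)
  moreover have "0 \<le> T ^ 3" "0 \<le> t ^ 2 * x ^ 2 / 4"
    using assms by auto
  ultimately have "- (x ^ 6 - t * x ^ 4 + t ^ 2 * x ^ 2 / 4 - t ^ 3 / 108) \<le> - (x ^ 6) + T * x ^ 4 + T ^ 3"
    by linarith
  then show ?thesis
    unfolding weight_def by simp
qed

lemma abs_weight_poly_le:
  fixes t T x :: real
  assumes "\<bar>t\<bar> \<le> T"
  shows "\<bar>x ^ 4 - t * x ^ 2 / 2 + t ^ 2 / 36\<bar> \<le> x ^ 4 + T * x ^ 2 / 2 + T ^ 2 / 36"
proof -
  have "\<bar>t * x ^ 2\<bar> = \<bar>t\<bar> * x ^ 2"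
    by (simp add: abs_mult)
  also have "\<dots> \<le> T * x ^ 2"
    using assms by (rule mult_right_mono) simp
  finally have "\<bar>t * x ^ 2\<bar> \<le> T * x ^ 2" .
  moreover have "t ^ 2 \<le> T ^ 2"
    using assms by (metis abs_ge_zero power2_abs power_mono)
  moreover have "0 \<le> x ^ 4" "0 \<le> t ^ 2" by (simp_all add: zero_le_even_power)
  ultimately show ?thesis
    unfolding abs_le_iff by linarith
qed

lemma weight_bounded_by_majorant:
  assumes t: "\<bar>t\<bar> \<le> T"
  shows "\<bar>weight t x\<bar> \<le> weight_majorant T x"
    and "\<bar>weight_dt t x\<bar> \<le> weight_majorant T x"
    and "\<bar>weight_dt2 t x\<bar> \<le> weight_majorant T x"
proof -
  define P where "P = x ^ 4 + T * x ^ 2 / 2 + T ^ 2 / 36"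
  define Q where "Q = 1 + x ^ 2 / 2 + T / 18 + P ^ 2"
  have majorant: "weight_majorant T x = Q * exp (- (x ^ 6) + T * x ^ 4 + T ^ 3)"
    unfolding weight_majorant_def Q_def P_def ..
  have w: "0 \<le> weight t x" "weight t x \<le> exp (- (x ^ 6) + T * x ^ 4 + T ^ 3)"
    using weight_le_exp[OF t] by (simp_all add: weight_def)
  have poly: "\<bar>x ^ 4 - t * x ^ 2 / 2 + t ^ 2 / 36\<bar> \<le> P"
    unfolding P_def by (rule abs_weight_poly_le[OF t])
  then have poly2: "(x ^ 4 - t * x ^ 2 / 2 + t ^ 2 / 36) ^ 2 \<le> P ^ 2"
    by (metis abs_ge_zero power2_abs power_mono)
  have "0 \<le> T" "0 \<le> x ^ 2" "0 \<le> P ^ 2" "0 \<le> (x ^ 4 - t * x ^ 2 / 2 + t ^ 2 / 36) ^ 2"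
    using t by auto
  moreover have "2 * P \<le> 1 + P ^ 2"
    using zero_le_power2[of "P - 1"] by (simp add: power2_diff)
  ultimately have Q: "1 \<le> Q" "P \<le> Q" "\<bar>(x ^ 4 - t * x ^ 2 / 2 + t ^ 2 / 36) ^ 2 + t / 18 - x ^ 2 / 2\<bar> \<le> Q"
    using poly2 t unfolding Q_def abs_le_iff by linarith+
  have "\<bar>c * weight t x\<bar> \<le> weight_majorant T x" if "\<bar>c\<bar> \<le> Q" for c
    unfolding majorant abs_mult using that w by (intro mult_mono) auto
  from this[of 1] this[of "x ^ 4 - t * x ^ 2 / 2 + t ^ 2 / 36"] this[OF Q(3)]
  show "\<bar>weight t x\<bar> \<le> weight_majorant T x"
    and "\<bar>weight_dt t x\<bar> \<le> weight_majorant T x"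
    and "\<bar>weight_dt2 t x\<bar> \<le> weight_majorant T x"
    using Q(1,2) poly unfolding weight_dt_def weight_dt2_def by auto
qed

lemma absolutely_integrable_weight_majorant:
  assumes "0 \<le> T"
  shows "weight_majorant T absolutely_integrable_on UNIV"
proof (rule absolutely_integrable_of_exp_decay)
  show "continuous_on UNIV (weight_majorant T)"
    unfolding weight_majorant_def by (intro continuous_intros) simp_all
  show "((\<lambda>x. weight_majorant T x * exp x) \<longlongrightarrow> 0) at_top"
    unfolding weight_majorant_def by real_asymp
  show "((\<lambda>x. weight_majorant T x * exp (- x)) \<longlongrightarrow> 0) at_bot"
    unfolding weight_majorant_def by real_asymp
qed

lemma weight_majorant_integrable: "0 \<le> T \<Longrightarrow> weight_majorant T integrable_on UNIV"
  by (rule set_lebesgue_integral_eq_integral(1)[OF absolutely_integrable_weight_majorant])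

lemma absolutely_integrable_weight: "weight t absolutely_integrable_on UNIV"
  and absolutely_integrable_weight_dt: "weight_dt t absolutely_integrable_on UNIV"
  and absolutely_integrable_weight_dt2: "weight_dt2 t absolutely_integrable_on UNIV"
proof -
  have majorant: "weight_majorant \<bar>t\<bar> integrable_on UNIV"
    by (rule weight_majorant_integrable) simp
  show "weight t absolutely_integrable_on UNIV"
    using continuous_on_weight majorant weight_bounded_by_majorant(1)[OF order_refl]
    by (rule absolutely_integrable_continuous_dominated)
  show "weight_dt t absolutely_integrable_on UNIV"
    using continuous_on_weight_dt majorant weight_bounded_by_majorant(2)[OF order_refl]
    by (rule absolutely_integrable_continuous_dominated)
  show "weight_dt2 t absolutely_integrable_on UNIV"
    using continuous_on_weight_dt2 majorant weight_bounded_by_majorant(3)[OF order_refl]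
    by (rule absolutely_integrable_continuous_dominated)
qed

lemma has_real_derivative_integral_weight:
  "((\<lambda>t. integral UNIV (weight t)) has_real_derivative integral UNIV (weight_dt t)) (at t)"
proof (rule has_real_derivative_integral_UNIV[OF has_real_derivative_weight])
  show "weight s integrable_on UNIV" for s
    by (rule set_lebesgue_integral_eq_integral(1)[OF absolutely_integrable_weight])
  show "weight_majorant (\<bar>t\<bar> + 1) integrable_on UNIV"
    by (rule weight_majorant_integrable) simp
  show "\<bar>weight_dt s x\<bar> \<le> weight_majorant (\<bar>t\<bar> + 1) x" if "\<bar>s - t\<bar> \<le> 1" for s x
    using that by (intro weight_bounded_by_majorant) linarith
qed

lemma has_real_derivative_integral_weight_dt:
  "((\<lambda>t. integral UNIV (weight_dt t)) has_real_derivative integral UNIV (weight_dt2 t)) (at t)"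
proof (rule has_real_derivative_integral_UNIV[OF has_real_derivative_weight_dt])
  show "weight_dt s integrable_on UNIV" for s
    by (rule set_lebesgue_integral_eq_integral(1)[OF absolutely_integrable_weight_dt])
  show "weight_majorant (\<bar>t\<bar> + 1) integrable_on UNIV"
    by (rule weight_majorant_integrable) simp
  show "\<bar>weight_dt2 s x\<bar> \<le> weight_majorant (\<bar>t\<bar> + 1) x" if "\<bar>s - t\<bar> \<le> 1" for s x
    using that by (intro weight_bounded_by_majorant) linarith
qed

lemma integral_weight_dt2: "integral UNIV (weight_dt2 t) = t ^ 4 / 1296 * integral UNIV (weight t)"
proof -
  have "integral UNIV (\<lambda>x. weight_dt2 t x - t ^ 4 / 1296 * weight t x) = 0"
  proof (rule integral_UNIV_derivative_eq_0[OF has_real_derivative_weight_ode_primitive])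
    show "(\<lambda>x. weight_dt2 t x - t ^ 4 / 1296 * weight t x) absolutely_integrable_on UNIV"
      by (intro set_integral_diff(1) set_integrable_mult_right
          absolutely_integrable_weight_dt2 absolutely_integrable_weight)
    show "((\<lambda>x. x * (t - 3 * x ^ 2) / 18 * weight t x) \<longlongrightarrow> 0) at_top"
      unfolding weight_def by real_asymp
    show "((\<lambda>x. x * (t - 3 * x ^ 2) / 18 * weight t x) \<longlongrightarrow> 0) at_bot"
      unfolding weight_def by real_asymp
  qed
  moreover have "weight_dt2 t integrable_on UNIV" "(\<lambda>x. t ^ 4 / 1296 * weight t x) integrable_on UNIV"
    using absolutely_integrable_weight_dt2 absolutely_integrable_weight
    unfolding absolutely_integrable_on_def by (auto intro: integrable_on_mult_right)
  ultimately show ?thesis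
    by (simp add: integral_diff)
qed

lemma integral_weight_0: "integral UNIV (weight 0) = Gamma (1/6) / 3"
  and integral_weight_dt_0: "integral UNIV (weight_dt 0) = Gamma (5/6) / 3"
proof -
  have moment: "((\<lambda>x. x ^ a * exp (- (x ^ 6))) has_integral Gamma ((real a + 1) / 6) / 3) UNIV"
    if "even a" for a :: nat
    using has_integral_power_mult_exp_neg_power[of 6 a] that
    by (subst has_integral_even_iff[where I = "Gamma ((real a + 1) / 6) / 6", simplified])
      (simp_all add: zero_le_even_power)
  from moment[of 0] have "(weight 0 has_integral Gamma (1/6) / 3) UNIV"
    by (simp add: weight_def[abs_def])
  then show "integral UNIV (weight 0) = Gamma (1/6) / 3"
    by (rule integral_unique)
  from moment[of 4] have "(weight_dt 0 has_integral Gamma (5/6) / 3) UNIV"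
    by (simp add: weight_dt_def[abs_def] weight_def)
  then show "integral UNIV (weight_dt 0) = Gamma (5/6) / 3"
    by (rule integral_unique)
qed

lemma integral_weight_eq_bessel_series:
  assumes t: "0 \<le> t"
  shows "integral UNIV (weight t) = pi / 9 * bessel_series t"
proof -
  define y where "y s = integral UNIV (weight s) - pi / 9 * bessel_series s" for s
  define y' where "y' s = integral UNIV (weight_dt s) - pi / 9 * bessel_series_deriv s" for s
  have "(y has_real_derivative y' s) (at s)" for s
    unfolding y_def y'_def
    by (intro DERIV_diff DERIV_cmult has_real_derivative_integral_weight bessel_series_has_derivative)
  moreover have "(y' has_real_derivative s ^ 4 / 1296 * y s) (at s)" for s
    unfolding y'_def
    by (rule derivative_eq_intros has_real_derivative_integral_weight_dt bessel_series_deriv_has_derivative refl)+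
      (simp add: y_def integral_weight_dt2 algebra_simps)
  moreover have "y 0 = 0" "y' 0 = 0"
  proof -
    have reflection: "Gamma (1/6) * Gamma (5/6 :: real) = 2 * pi"
      using Gamma_reflection_real[of "1/6"] by (simp add: sin_30)
    have "0 < Gamma (1/6 :: real)" "0 < Gamma (5/6 :: real)"
      by simp_all
    then have "Gamma (1/6 :: real) \<noteq> 0" "Gamma (5/6 :: real) \<noteq> 0"
      by linarith+
    moreover have rGamma_7_6: "rGamma (7/6 :: real) = 6 * rGamma (1/6)"
      using rGamma_plus1[of "1/6 :: real"] by simp
    ultimately show "y 0 = 0" "y' 0 = 0"
      using reflection
      unfolding y_def y'_def integral_weight_0 integral_weight_dt_0 bessel_series_0
        bessel_series_deriv_0 rGamma_7_6
      by (simp_all add: rGamma_inverse_Gamma field_simps)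
  qed
  moreover have "\<bar>s ^ 4 / 1296\<bar> \<le> t ^ 4 / 1296" if "0 \<le> s" "s \<le> t" for s
    using that power_mono[of s t 4] by simp
  ultimately have "y t = 0"
    using t by (intro linear_second_order_ode_zero[of y y' "\<lambda>s. s ^ 4 / 1296" t "t ^ 4 / 1296"])
  then show ?thesis by (simp add: y_def)
qed

lemma has_integral_exp_neg_sextic:
  assumes "0 \<le> t"
  shows "((\<lambda>x. exp (- (x^6 - t * x^4 + t^2 * x^2 / 4))) has_integral
    pi / 9 * bessel_series t * exp (- (t^3 / 108))) UNIV"
proof -
  have "(weight t has_integral pi / 9 * bessel_series t) UNIV"
    using set_lebesgue_integral_eq_integral(1)[OF absolutely_integrable_weight]
    unfolding integral_weight_eq_bessel_series[OF assms, symmetric] by (rule integrable_integral)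
  moreover have "(\<lambda>x. weight t x * exp (- (t^3 / 108))) = (\<lambda>x. exp (- (x^6 - t * x^4 + t^2 * x^2 / 4)))"
    by (simp add: fun_eq_iff weight_def flip: exp_add)
  ultimately show ?thesis
    using has_integral_mult_left by metis
qed

theorem lemma6p1:
  fixes \<tau> :: real
  assumes "\<tau> > 0"
  defines "C \<equiv> pi * sqrt (6 * \<tau>) / 9 *
      (besselI (1/6) (\<tau>^3 / 108) + besselI (-1/6) (\<tau>^3 / 108)) * exp (- (\<tau>^3 / 108))"
  shows "((\<lambda>x::real. exp (- (x^6 - \<tau> * x^4 + \<tau>^2 * x^2 / 4))) has_integral C) UNIV \<and>
         ((\<lambda>s::real. s powr (-1/2) * exp (- (s * (s - \<tau> / 2)^2))) has_integral C) {0<..}"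
proof -
  define h where "h x = exp (- (x^6 - \<tau> * x^4 + \<tau>^2 * x^2 / 4))" for x :: real
  have "C = pi / 9 * bessel_series \<tau> * exp (- (\<tau>^3 / 108))"
    using assms unfolding C_def by (simp add: bessel_series_eq_besselI)
  then have full: "(h has_integral C) UNIV"
    unfolding h_def[abs_def] using assms by (simp only: has_integral_exp_neg_sextic less_imp_le)
  then have "((\<lambda>s. s powr (-1/2) * h (sqrt s)) has_integral C) {0<..}"
    by (subst (asm) has_integral_even_iff_sqrt_substitution) (simp_all add: h_def)
  moreover have "s powr (-1/2) * h (sqrt s) = s powr (-1/2) * exp (- (s * (s - \<tau> / 2)^2))"
    if "s \<in> {0<..}" for s
    using that by (simp add: h_def power2_eq_square power_mult_distrib algebra_simps eval_nat_numeral)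
  ultimately have "((\<lambda>s. s powr (-1/2) * exp (- (s * (s - \<tau> / 2)^2))) has_integral C) {0<..}"
    by (rule has_integral_eq[rotated])
  with full show ?thesis
    unfolding h_def[abs_def] by (rule conjI)
qed

end
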